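(* For all $r\in[0,35]$ and all integers $n\ge73$, $|f(r)-f^{(n)}(r)|\le0.0052$, where $f^{(n)}(r)=\max_{4\le m\le n}f_m(r)$ and $f(r)=\sup_{m\ge4}f_m(r)$.
   Context: For $r\ge0$, $\mu_\pm=(1\pm\sqrt{1+4r})/2$, $\mu=\mu_-/\mu_+$, $\alpha_k(r)=\frac1{\mu_+}\frac{1-\mu^k}{1-\mu^{k+1}}$ for $k\ge1$, and for $m\ge4$ $$f_m(r)=r\alpha_{m-2}(r)\alpha_m(r)\Big[\frac{(1-\alpha_{m-1}(r)(1+r))^2}{1+2r}+\frac{r\alpha_{m-3}(r)(1-\alpha_{m-1}(r))^2}{1+r}\Big].$$ *)

theory Defs
  imports Complex_Main
begin

definition mu_plus :: "real \<Rightarrow> real" where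
  "mu_plus r = (1 + sqrt (1 + 4 * r)) / 2"

definition mu_minus :: "real \<Rightarrow> real" where
  "mu_minus r = (1 - sqrt (1 + 4 * r)) / 2"

definition mu :: "real \<Rightarrow> real" where
  "mu r = mu_minus r / mu_plus r"

definition alpha :: "nat \<Rightarrow> real \<Rightarrow> real" where
  "alpha k r = (1 / mu_plus r) * ((1 - mu r ^ k) / (1 - mu r ^ (k + 1)))"

text \<open>f_m(r), intended for m >= 4.\<close>
definition fm :: "nat \<Rightarrow> real \<Rightarrow> real" where
  "fm m r = r * alpha (m - 2) r * alpha m r *
     ((1 - alpha (m - 1) r * (1 + r))^2 / (1 + 2 * r)
      + r * alpha (m - 3) r * (1 - alpha (m - 1) r)^2 / (1 + r))"

definition fn_max :: "nat \<Rightarrow> real \<Rightarrow> real" where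
  "fn_max n r = Max ((\<lambda>m. fm m r) ` {4..n})"

definition f_sup :: "real \<Rightarrow> real" where
  "f_sup r = (SUP m\<in>{4..}. fm m r)"

end

theory Submission
  imports Defs
begin

text \<open>Put \<open>a = 1 / mu_plus r\<close>. It solves \<open>r a\<^sup>2 = 1 - a\<close>, and \<open>mu r = a - 1\<close>, so
  \<open>alpha k r - a = a mu\<^sup>k (mu - 1) / (1 - mu\<^bsup>k+1\<^esup>)\<close> with \<open>\<bar>mu\<bar> = 1 - a \<le> 11/13\<close> for
  \<open>r \<le> 35\<close>; hence for \<open>k \<ge> 70\<close> every \<open>alpha k r\<close> is within relative error \<open>1/20000\<close>
  of \<open>a\<close>. A first-order perturbation estimate of the formula for \<open>f_m\<close> around the point where
  all four arguments equal \<open>a\<close> then puts every \<open>f_m\<close> with \<open>m \<ge> 73\<close> within \<open>29/20000\<close>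
  of one common value. As \<open>n \<ge> 73\<close>, the terms beyond \<open>n\<close> exceed \<open>f_n\<close> by at most
  twice that, which gives \<open>0.0029 \<le> 0.0052\<close>.\<close>

definition alpha_limit :: "real \<Rightarrow> real" where
  "alpha_limit r = 1 / mu_plus r"

lemma alpha_limit_eq_sqrt:
  "alpha_limit r = 2 / (1 + sqrt (1 + 4 * r))"
  by (simp add: alpha_limit_def mu_plus_def)

lemma alpha_limit_fixed_point:
  assumes "-1/4 \<le> r"
  shows "r * alpha_limit r ^ 2 = 1 - alpha_limit r"
proof -
  define t where "t = 1 + sqrt (1 + 4 * r)"
  have "0 < t" and r: "r = ((t - 1)\<^sup>2 - 1) / 4"
    using assms by (simp_all add: t_def add_pos_nonneg)
  have "r * (2 / t) ^ 2 = 1 - 2 / t"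
    using \<open>0 < t\<close> unfolding r by (simp add: field_simps power2_eq_square)
  then show ?thesis
    by (simp add: alpha_limit_eq_sqrt t_def)
qed

lemma mu_eq_alpha_limit:
  assumes "-1/4 \<le> r"
  shows "mu r = alpha_limit r - 1"
proof -
  define t where "t = 1 + sqrt (1 + 4 * r)"
  have "0 < t"
    using assms by (simp add: t_def add_pos_nonneg)
  have "mu r = ((2 - t) / 2) / (t / 2)" and "alpha_limit r = 2 / t"
    by (simp_all add: mu_def mu_minus_def mu_plus_def alpha_limit_eq_sqrt t_def)
  then show ?thesis
    unfolding \<open>mu r = _\<close> \<open>alpha_limit r = _\<close> using \<open>0 < t\<close> by (simp add: field_simps)
qed

lemma alpha_limit_pos:
  assumes "-1/4 \<le> r"
  shows "0 < alpha_limit r"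
  using assms by (simp add: alpha_limit_eq_sqrt add_pos_nonneg)

lemma alpha_limit_le_one:
  assumes "0 \<le> r"
  shows "alpha_limit r \<le> 1"
proof -
  have "2 \<le> 1 + sqrt (1 + 4 * r)"
    using assms by simp
  then show ?thesis
    by (simp add: alpha_limit_eq_sqrt divide_le_eq_1 add_pos_nonneg)
qed

lemma alpha_limit_lower_bound:
  assumes "-1/4 \<le> r" and "0 \<le> c" and "4 * r \<le> c\<^sup>2 - 1"
  shows "2 / (1 + c) \<le> alpha_limit r"
proof -
  have "sqrt (1 + 4 * r) \<le> sqrt (c\<^sup>2)"
    using assms(3) by (intro real_sqrt_le_mono) simp
  then have "sqrt (1 + 4 * r) \<le> c"
    using assms(2) by simp
  then show ?thesis
    using assms(1) by (simp add: alpha_limit_eq_sqrt frac_le add_pos_nonneg)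
qed

lemma abs_alpha_sub_alpha_limit_le:
  assumes "0 \<le> r"
  defines "a \<equiv> alpha_limit r"
  shows "\<bar>alpha k r - a\<bar> \<le> 2 * a * (1 - a) ^ k / (1 - (1 - a) ^ (k + 1))"
proof -
  define q where "q = a - 1"
  have a: "0 < a" "a \<le> 1"
    using assms alpha_limit_pos alpha_limit_le_one by auto
  have mu: "mu r = q" and abs_q: "\<bar>q\<bar> = 1 - a"
    using assms a by (simp_all add: mu_eq_alpha_limit q_def)
  have "(1 - a) ^ (k + 1) \<le> (1 - a) ^ 1"
    using a by (intro power_decreasing) auto
  moreover have "q ^ (k + 1) \<le> (1 - a) ^ (k + 1)"
    using abs_q by (metis abs_ge_self power_abs power_mono_odd)
  ultimately have den: "0 < 1 - (1 - a) ^ (k + 1)" "1 - (1 - a) ^ (k + 1) \<le> 1 - q ^ (k + 1)"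
    using a by (auto simp del: power_Suc)
  have "alpha k r = a * ((1 - q ^ k) / (1 - q ^ (k + 1)))"
    unfolding alpha_def mu by (simp add: a_def alpha_limit_def)
  then have "alpha k r - a = a * (q ^ k * (q - 1) / (1 - q ^ (k + 1)))"
    using den by (simp add: field_simps)
  then have "\<bar>alpha k r - a\<bar> = a * ((1 - a) ^ k * (2 - a) / (1 - q ^ (k + 1)))"
    using a den abs_q by (simp add: abs_mult power_abs q_def)
  also have "\<dots> \<le> a * ((1 - a) ^ k * 2 / (1 - (1 - a) ^ (k + 1)))"
    using a den by (intro mult_left_mono frac_le) auto
  finally show ?thesis
    by (simp add: mult_ac)
qed

lemma abs_alpha_sub_alpha_limit_le_tail:
  assumes "0 \<le> r" and "r \<le> 35" and "70 \<le> k"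
  defines "a \<equiv> alpha_limit r"
  shows "\<bar>alpha k r - a\<bar> \<le> a / 20000"
proof -
  have "2 / (1 + 12) \<le> a"
    unfolding a_def using assms by (intro alpha_limit_lower_bound) auto
  then have a: "0 \<le> 1 - a" "1 - a \<le> 11 / 13"
    using alpha_limit_le_one assms by (auto simp: a_def)
  have "(1 - a) ^ k \<le> (1 - a) ^ 70"
    using a assms by (intro power_decreasing) auto
  also have "\<dots> \<le> (11 / 13) ^ 70"
    using a by (intro power_mono) auto
  also have "\<dots> \<le> 1 / 80000"
    by (simp add: power_divide)
  finally have "(1 - a) ^ k \<le> 1 / 80000" .
  moreover have "(1 - a) ^ (k + 1) \<le> (1 - a) ^ k"
    using a by (intro power_decreasing) auto
  ultimately have "2 * a * (1 - a) ^ k / (1 - (1 - a) ^ (k + 1)) \<le> 2 * a * (1 / 80000) / (1 - 1 / 80000)"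
    using a alpha_limit_pos[of r] assms by (intro frac_le mult_left_mono) (auto simp: a_def)
  also have "\<dots> \<le> a / 20000"
    using alpha_limit_pos[of r] assms by (simp add: a_def)
  finally show ?thesis
    using abs_alpha_sub_alpha_limit_le[OF assms(1), of k] by (simp add: a_def)
qed

lemma fixed_point_le_one:
  fixes r a :: real
  assumes "0 \<le> r" and "r * a\<^sup>2 = 1 - a"
  shows "a \<le> 1"
  using assms by (metis diff_ge_0_iff_ge mult_nonneg_nonneg zero_le_power2)

lemma square_term_le_one:
  fixes r a :: real
  assumes "0 \<le> r" and "0 < a" and fixed: "r * a\<^sup>2 = 1 - a"
  shows "(1 - a * (1 + r))\<^sup>2 / (1 + 2 * r) \<le> 1"
proof -
  have "a \<le> 1"
    using fixed_point_le_one assms by blast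
  have "a * (1 - a * (1 + r)) = - (1 - a)\<^sup>2"
    using fixed by (simp add: algebra_simps power2_eq_square)
  then have "a\<^sup>2 * (1 - a * (1 + r))\<^sup>2 = ((1 - a)\<^sup>2)\<^sup>2"
    by (metis power_mult_distrib power2_minus)
  also have "\<dots> \<le> (1 - a)\<^sup>2"
    unfolding power2_eq_square[of "(1 - a)\<^sup>2"]
    using \<open>0 < a\<close> \<open>a \<le> 1\<close> by (intro mult_left_le power_le_one) auto
  also have "\<dots> \<le> a\<^sup>2 * (1 + 2 * r)"
    using fixed by (simp add: algebra_simps power2_eq_square)
  finally have "(1 - a * (1 + r))\<^sup>2 \<le> 1 + 2 * r"
    using \<open>0 < a\<close> by simp
  then show ?thesis
    using \<open>0 \<le> r\<close> by simp
qed

lemma abs_square_term_sub_le: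
  fixes r a eps w :: real
  assumes "0 \<le> r" and a_ge: "2/13 \<le> a" and fixed: "r * a\<^sup>2 = 1 - a"
    and "0 \<le> eps" and "eps \<le> 1/15" and w: "\<bar>w - a\<bar> \<le> eps * a"
  shows "\<bar>(1 - w * (1 + r))\<^sup>2 / (1 + 2 * r) - (1 - a * (1 + r))\<^sup>2 / (1 + 2 * r)\<bar> \<le> 14 * eps"
proof -
  define X where "X = 1 - w * (1 + r)"
  define X0 where "X0 = 1 - a * (1 + r)"
  have "a \<le> 1"
    using fixed_point_le_one assms by blast
  have "a * (a * r) \<le> 1"
    using fixed a_ge by (simp add: power2_eq_square algebra_simps)
  moreover have "2/13 * (a * r) \<le> a * (a * r)"
    using a_ge \<open>0 \<le> r\<close> by (intro mult_right_mono) auto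
  ultimately have "2/13 * (a * r) \<le> 1"
    by linarith
  then have ar: "0 \<le> a * r" "a * r \<le> 13/2"
    using a_ge \<open>0 \<le> r\<close> by auto
  have "\<bar>X - X0\<bar> = \<bar>w - a\<bar> * (1 + r)"
    using \<open>0 \<le> r\<close> by (simp add: X_def X0_def abs_mult flip: abs_minus_commute left_diff_distrib)
  also have "\<dots> \<le> eps * (a * (1 + r))"
    using w \<open>0 \<le> r\<close> by (simp add: mult_right_mono)
  finally have diff: "\<bar>X - X0\<bar> \<le> eps * (a * (1 + r))" .
  have "a * (1 + r) \<le> 15/2" and "a * (1 + r) \<le> 1 + 2 * r"
    using ar \<open>a \<le> 1\<close> \<open>0 \<le> r\<close> mult_right_mono[OF \<open>a \<le> 1\<close>, of r]
    by (simp_all add: algebra_simps)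
  then have diff_le: "\<bar>X - X0\<bar> \<le> eps * (15/2)" "\<bar>X - X0\<bar> \<le> eps * (1 + 2 * r)"
    using diff \<open>0 \<le> eps\<close> by (meson mult_left_mono order_trans)+
  have "X0 = 1 - a - a * r"
    by (simp add: X0_def algebra_simps)
  then have "\<bar>X0\<bar> \<le> 13/2"
    using ar a_ge \<open>a \<le> 1\<close> by (intro abs_leI) linarith+
  moreover have "\<bar>X + X0\<bar> \<le> \<bar>X - X0\<bar> + 2 * \<bar>X0\<bar>"
    by (auto simp: abs_if)
  ultimately have sum_le: "\<bar>X + X0\<bar> \<le> 14"
    using diff_le(1) \<open>eps \<le> 1/15\<close> by linarith
  have "\<bar>X\<^sup>2 / (1 + 2 * r) - X0\<^sup>2 / (1 + 2 * r)\<bar> = \<bar>X - X0\<bar> * \<bar>X + X0\<bar> / (1 + 2 * r)"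
    using \<open>0 \<le> r\<close>
    by (simp add: power2_eq_square square_diff_square_factored abs_mult flip: diff_divide_distrib)
  also have "\<dots> \<le> eps * (1 + 2 * r) * 14 / (1 + 2 * r)"
    using diff_le(2) sum_le \<open>0 \<le> eps\<close> \<open>0 \<le> r\<close> by (intro divide_right_mono mult_mono) auto
  also have "\<dots> = 14 * eps"
    using \<open>0 \<le> r\<close> by simp
  finally show ?thesis
    by (simp add: X_def X0_def)
qed

lemma abs_cubic_term_sub_le:
  fixes r a eps w z :: real
  assumes "0 \<le> r" and "0 < a" and "a \<le> 1" and "0 \<le> eps" and "eps \<le> 1"
    and w: "\<bar>w - a\<bar> \<le> eps * a" and "\<bar>z - a\<bar> \<le> eps * a"
  shows "\<bar>r * z * (1 - w)\<^sup>2 / (1 + r) - r * a * (1 - a)\<^sup>2 / (1 + r)\<bar> \<le> 3 * eps"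
proof -
  have "eps * a \<le> a"
    using assms by (simp add: mult_left_le_one_le)
  then have "0 \<le> w" "w \<le> 2 * a"
    using w by (auto simp: abs_le_iff)
  then have "\<bar>1 - w\<bar> \<le> 1" and "\<bar>2 - w - a\<bar> \<le> 2"
    using assms by (auto simp: abs_le_iff)
  then have "(1 - w)\<^sup>2 \<le> 1"
    by (metis abs_le_square_iff abs_one one_power2)
  have "z * (1 - w)\<^sup>2 - a * (1 - a)\<^sup>2 = (z - a) * (1 - w)\<^sup>2 + a * ((a - w) * (2 - w - a))"
    by (simp add: algebra_simps power2_eq_square)
  then have "\<bar>z * (1 - w)\<^sup>2 - a * (1 - a)\<^sup>2\<bar> \<le> \<bar>z - a\<bar> * (1 - w)\<^sup>2 + a * (\<bar>w - a\<bar> * \<bar>2 - w - a\<bar>)"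
    using \<open>0 < a\<close> by (simp add: abs_mult abs_minus_commute abs_triangle_ineq[THEN order.trans])
  also have "\<dots> \<le> eps * a * 1 + a * (eps * a * 2)"
    using assms \<open>(1 - w)\<^sup>2 \<le> 1\<close> \<open>\<bar>2 - w - a\<bar> \<le> 2\<close>
    by (intro add_mono mult_mono mult_left_mono) auto
  also have "\<dots> \<le> eps * 1 * 1 + 1 * (eps * 1 * 2)"
    using assms by (intro add_mono mult_mono) auto
  finally have diff: "\<bar>z * (1 - w)\<^sup>2 - a * (1 - a)\<^sup>2\<bar> \<le> 3 * eps"
    by simp
  have "r * z * (1 - w)\<^sup>2 / (1 + r) - r * a * (1 - a)\<^sup>2 / (1 + r)
      = r / (1 + r) * (z * (1 - w)\<^sup>2 - a * (1 - a)\<^sup>2)"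
    by (simp add: algebra_simps diff_divide_distrib)
  then have "\<bar>r * z * (1 - w)\<^sup>2 / (1 + r) - r * a * (1 - a)\<^sup>2 / (1 + r)\<bar>
      = r / (1 + r) * \<bar>z * (1 - w)\<^sup>2 - a * (1 - a)\<^sup>2\<bar>"
    using \<open>0 \<le> r\<close> by (simp add: abs_mult)
  also have "\<dots> \<le> 1 * (3 * eps)"
    using \<open>0 \<le> r\<close> diff by (intro mult_mono) auto
  finally show ?thesis
    by simp
qed

definition fm_bracket :: "real \<Rightarrow> real \<Rightarrow> real \<Rightarrow> real" where
  "fm_bracket r w z = (1 - w * (1 + r))\<^sup>2 / (1 + 2 * r) + r * z * (1 - w)\<^sup>2 / (1 + r)"

lemma fm_eq_fm_bracket:
  "fm m r = r * alpha (m - 2) r * alpha m r * fm_bracket r (alpha (m - 1) r) (alpha (m - 3) r)"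
  by (simp add: fm_def fm_bracket_def)

lemma abs_fm_bracket_sub_le:
  fixes r a eps w z :: real
  assumes "0 \<le> r" and "2/13 \<le> a" and "r * a\<^sup>2 = 1 - a" and "0 \<le> eps" and "eps \<le> 1/15"
    and "\<bar>w - a\<bar> \<le> eps * a" and "\<bar>z - a\<bar> \<le> eps * a"
  shows "\<bar>fm_bracket r w z - fm_bracket r a a\<bar> \<le> 17 * eps"
proof -
  have "a \<le> 1"
    using fixed_point_le_one assms by blast
  have "\<bar>(1 - w * (1 + r))\<^sup>2 / (1 + 2 * r) - (1 - a * (1 + r))\<^sup>2 / (1 + 2 * r)\<bar> \<le> 14 * eps"
    using assms by (intro abs_square_term_sub_le)
  moreover have "\<bar>r * z * (1 - w)\<^sup>2 / (1 + r) - r * a * (1 - a)\<^sup>2 / (1 + r)\<bar> \<le> 3 * eps"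
    using assms \<open>a \<le> 1\<close> by (intro abs_cubic_term_sub_le) auto
  ultimately show ?thesis
    unfolding fm_bracket_def abs_le_iff by (intro conjI) linarith+
qed

lemma fm_bracket_fixed_point_le:
  fixes r a :: real
  assumes "0 \<le> r" and "0 < a" and "r * a\<^sup>2 = 1 - a"
  shows "fm_bracket r a a \<le> 2"
proof -
  have "a \<le> 1"
    using fixed_point_le_one assms by blast
  then have "a * (1 - a)\<^sup>2 \<le> 1"
    using \<open>0 < a\<close> by (intro mult_le_one) (auto simp: power_le_one)
  then have "r / (1 + r) * (a * (1 - a)\<^sup>2) \<le> 1 * 1"
    using assms by (intro mult_mono) auto
  then show ?thesis
    using square_term_le_one[OF assms] by (simp add: fm_bracket_def)
qed

lemma abs_perturbed_fm_sub_le: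
  fixes r a eps u v w z :: real
  assumes "0 \<le> r" and a_ge: "2/13 \<le> a" and fixed: "r * a\<^sup>2 = 1 - a"
    and "0 \<le> eps" and "eps \<le> 1/15"
    and "\<bar>u - a\<bar> \<le> eps * a" and v: "\<bar>v - a\<bar> \<le> eps * a"
    and "\<bar>w - a\<bar> \<le> eps * a" and "\<bar>z - a\<bar> \<le> eps * a"
  shows "\<bar>r * u * v * fm_bracket r w z - r * a * a * fm_bracket r a a\<bar> \<le> 29 * eps"
proof -
  define G where "G = fm_bracket r w z"
  define G0 where "G0 = fm_bracket r a a"
  have raa: "0 \<le> r * a * a" "r * a * a \<le> 1"
    using fixed a_ge \<open>0 \<le> r\<close> by (auto simp: power2_eq_square)
  have "\<bar>G - G0\<bar> \<le> 17 * eps"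
    unfolding G_def G0_def using assms by (intro abs_fm_bracket_sub_le)
  moreover have "0 \<le> G0" "G0 \<le> 2"
    using assms fm_bracket_fixed_point_le[of r a] by (auto simp: G0_def fm_bracket_def)
  ultimately have "\<bar>G\<bar> \<le> 4"
    using \<open>eps \<le> 1/15\<close> by linarith
  have "eps * a \<le> a"
    using assms by (intro mult_left_le_one_le) auto
  then have "\<bar>v\<bar> \<le> 2 * a"
    using v a_ge unfolding abs_le_iff by (intro conjI) linarith+
  have "r * u * v - r * a * a = r * ((u - a) * v + a * (v - a))"
    by (simp add: algebra_simps)
  then have "\<bar>r * u * v - r * a * a\<bar> = r * \<bar>(u - a) * v + a * (v - a)\<bar>"
    using \<open>0 \<le> r\<close> by (simp add: abs_mult)
  also have "\<dots> \<le> r * (eps * a * (2 * a) + a * (eps * a))"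
    using assms \<open>\<bar>v\<bar> \<le> 2 * a\<close>
    by (intro mult_left_mono add_mono abs_triangle_ineq[THEN order.trans])
      (auto simp: abs_mult intro!: mult_mono)
  also have "\<dots> = 3 * eps * (r * a * a)"
    by (simp add: algebra_simps)
  also have "\<dots> \<le> 3 * eps"
    using raa \<open>0 \<le> eps\<close> by (simp add: mult_left_le)
  finally have "\<bar>r * u * v - r * a * a\<bar> \<le> 3 * eps" .
  have "r * u * v * G - r * a * a * G0 = (r * u * v - r * a * a) * G + r * a * a * (G - G0)"
    by (simp add: algebra_simps)
  then have "\<bar>r * u * v * G - r * a * a * G0\<bar> \<le> \<bar>r * u * v - r * a * a\<bar> * \<bar>G\<bar> + r * a * a * \<bar>G - G0\<bar>"
    using \<open>0 \<le> r\<close> a_ge abs_triangle_ineq[of "(r * u * v - r * a * a) * G" "r * a * a * (G - G0)"]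
    by (simp add: abs_mult)
  also have "\<dots> \<le> 3 * eps * 4 + 1 * (17 * eps)"
    using raa \<open>\<bar>G\<bar> \<le> 4\<close> \<open>\<bar>G - G0\<bar> \<le> 17 * eps\<close> \<open>\<bar>r * u * v - r * a * a\<bar> \<le> 3 * eps\<close>
    by (intro add_mono mult_mono) auto
  finally show ?thesis
    by (simp add: G_def G0_def)
qed

lemma abs_SUP_sub_Max_le:
  fixes g :: "nat \<Rightarrow> real"
  assumes near: "\<And>m. N \<le> m \<Longrightarrow> \<bar>g m - L\<bar> \<le> \<delta>" and "N \<le> n" and "k \<le> n"
  shows "\<bar>(SUP m\<in>{k..}. g m) - Max (g ` {k..n})\<bar> \<le> 2 * \<delta>"
proof -
  define M where "M = Max (g ` {k..n})"
  have le_M: "g m \<le> M" if "m \<in> {k..n}" for m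
    using that by (simp add: M_def)
  have "g m \<le> M + 2 * \<delta>" if "k \<le> m" for m
  proof (cases "m \<le> n")
    case True
    with that le_M[of m] near[of n] \<open>N \<le> n\<close> show ?thesis
      by auto
  next
    case False
    with near[of m] near[of n] le_M[of n] \<open>N \<le> n\<close> \<open>k \<le> n\<close> show ?thesis
      by (auto simp: abs_le_iff)
  qed
  then have "bdd_above (g ` {k..})" and "(SUP m\<in>{k..}. g m) \<le> M + 2 * \<delta>"
    by (force intro: bdd_aboveI2, auto intro: cSUP_least)
  moreover have "M \<in> g ` {k..n}"
    unfolding M_def using \<open>k \<le> n\<close> by (intro Max_in) auto
  then obtain m0 where "m0 \<in> {k..n}" and "M = g m0"
    by blast
  ultimately have "M \<le> (SUP m\<in>{k..}. g m)"
    by (auto intro: cSUP_upper)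
  with \<open>(SUP m\<in>{k..}. g m) \<le> M + 2 * \<delta>\<close> show ?thesis
    by (simp add: M_def)
qed

lemma abs_fm_sub_limit_le:
  assumes "0 \<le> r" and "r \<le> 35" and "73 \<le> m"
  defines "a \<equiv> alpha_limit r"
  shows "\<bar>fm m r - r * a * a * fm_bracket r a a\<bar> \<le> 29 / 20000"
proof -
  have near: "\<bar>alpha k r - a\<bar> \<le> 1 / 20000 * a" if "70 \<le> k" for k
    using abs_alpha_sub_alpha_limit_le_tail[OF assms(1,2) that] by (simp add: a_def)
  have "2 / (1 + 12) \<le> a"
    unfolding a_def using assms by (intro alpha_limit_lower_bound) auto
  moreover have "r * a\<^sup>2 = 1 - a"
    unfolding a_def using assms by (intro alpha_limit_fixed_point) auto
  ultimately show ?thesis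
    unfolding fm_eq_fm_bracket
    using abs_perturbed_fm_sub_le[of r a "1 / 20000"] assms near by simp
qed

theorem propositionA1:
  fixes r :: real and n :: nat
  assumes "0 \<le> r" and "r \<le> 35" and "73 \<le> n"
  shows "\<bar>f_sup r - fn_max n r\<bar> \<le> 0.0052"
proof -
  define a where "a = alpha_limit r"
  have "\<bar>f_sup r - fn_max n r\<bar> \<le> 2 * (29 / 20000)"
    unfolding f_sup_def fn_max_def using assms abs_fm_sub_limit_le
    by (intro abs_SUP_sub_Max_le[where N = 73 and L = "r * a * a * fm_bracket r a a"])
      (auto simp: a_def)
  then show ?thesis
    by simp
qed

end
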